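(* Assume $N>1$. Then the operator $L$ satisfies the trace condition: for any $\zeta$ in the domain of $L^*$ such that the eigenvalues of the symmetric matrix $-L^*\zeta(x)$ are bounded above by a constant $k$ for a.e. $x\in\Omega$, the eigenvalues of $L^*\zeta(x)$ are bounded above for a.e. $x\in\Omega$ by a constant depending only on $k$ (and not on $\zeta$ or $x$).
   Context: Fix integers $N\ge1$, $p\ge1$, $n=pN^2$, $\Omega=\mathbb T^{N\times p}$ with coordinates $x_{jl}$. Indices of $\mathbb R^n$ are triples $(i,j,k)$, $i,j\in\{1,\dots,N\}$, $k\in\{1,\dots,p\}$; elements of the space $\mathbb R^{n\times n}_s$ of symmetric matrices are arrays $A_{ijk,hqr}$, with Frobenius inner product. The linear map $\mathfrak U:\mathbb R^{n\times n}_s\to\mathbb R^N$ is $(\mathfrak U A)_i=\frac12\sum_{l=1}^p\big[A_{iil,iil}+\sum_{j\ne i}(A_{jjl,ijl}+A_{ijl,jjl})\big]$, with adjoint $\mathfrak U^*:\mathbb R^N\to\mathbb R^{n\times n}_s$. For $w:\Omega\to\mathbb R^{n\times n}_s$, $Lw=-\nabla(\mathfrak U w)$ ($\mathbb R^n$-valued with components $-\partial_{x_{jk}}(\mathfrak Uw)_i$), and $L^*=\mathfrak U^*\operatorname{div}$ is its $L^2(\Omega)$-adjoint, acting on $\mathbb R^n$-valued functions $\zeta$. *)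

theory Defs
  imports "HOL-Analysis.Analysis"
begin

text \<open>Index set of R^n: triples (i,j,k) with i,j :: 'N (size N), k :: 'p (size p).
  Coordinates of Omega = T^(N x p): pairs (j,l) :: 'N \<times> 'p.
  The torus is represented by the unit cube with Lebesgue measure; test functions
  are 1-periodic in every coordinate.\<close>

definition symmetric_mat :: "real^'i^'i \<Rightarrow> bool" where
  "symmetric_mat A \<longleftrightarrow> transpose A = A"

definition Uop :: "real^('N::finite \<times> 'N \<times> 'p::finite)^('N \<times> 'N \<times> 'p) \<Rightarrow> real^'N" where
  "Uop A = (\<chi> i. (1/2) * (\<Sum>l\<in>UNIV. A$(i,i,l)$(i,i,l)
       + (\<Sum>j\<in>UNIV - {i}. A$(j,j,l)$(i,j,l) + A$(i,j,l)$(j,j,l))))"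

definition Uadj :: "real^'N \<Rightarrow> real^('N::finite \<times> 'N \<times> 'p::finite)^('N \<times> 'N \<times> 'p)" where
  "Uadj v = (THE B. symmetric_mat B \<and> (\<forall>A. symmetric_mat A \<longrightarrow> Uop A \<bullet> v = A \<bullet> B))"

definition partial_deriv :: "('a::real_normed_vector \<Rightarrow> 'b::real_normed_vector) \<Rightarrow> 'a \<Rightarrow> 'a \<Rightarrow> 'b" where
  "partial_deriv f e x = vector_derivative (\<lambda>t. f (x + t *\<^sub>R e)) (at 0)"

definition Omega :: "(real^('N::finite \<times> 'p::finite)) set" where
  "Omega = cbox 0 One"

definition test_fun :: "(real^('N \<times> 'p) \<Rightarrow> real^('N::finite \<times> 'N \<times> 'p::finite)^('N \<times> 'N \<times> 'p)) \<Rightarrow> bool" where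
  "test_fun w \<longleftrightarrow> (\<forall>x. symmetric_mat (w x))
     \<and> (\<forall>x z. (\<forall>c. z$c \<in> \<int>) \<longrightarrow> w (x + z) = w x)
     \<and> (\<forall>c. (\<forall>x. (\<lambda>t. w (x + t *\<^sub>R axis c 1)) differentiable (at 0))
            \<and> continuous_on UNIV (partial_deriv w (axis c 1)))"

definition Lop :: "(real^('N \<times> 'p) \<Rightarrow> real^('N::finite \<times> 'N \<times> 'p::finite)^('N \<times> 'N \<times> 'p))
     \<Rightarrow> real^('N \<times> 'p) \<Rightarrow> real^('N \<times> 'N \<times> 'p)" where
  "Lop w x = (\<chi> ijk. case ijk of (i,j,k) \<Rightarrow>
       - partial_deriv (\<lambda>y. Uop (w y) $ i) (axis (j,k) 1) x)"

definition L2_on :: "'a::euclidean_space set \<Rightarrow> ('a \<Rightarrow> 'b::euclidean_space) \<Rightarrow> bool" where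
  "L2_on S f \<longleftrightarrow> f \<in> borel_measurable (lebesgue_on S)
      \<and> integrable (lebesgue_on S) (\<lambda>x. (norm (f x))\<^sup>2)"

text \<open>is_Ladj zeta f: zeta lies in the domain of the L^2(Omega)-adjoint L^* of L and
  f is (a representative of) L^* zeta.\<close>
definition is_Ladj :: "(real^('N::finite \<times> 'p::finite) \<Rightarrow> real^('N \<times> 'N \<times> 'p))
     \<Rightarrow> (real^('N \<times> 'p) \<Rightarrow> real^('N::finite \<times> 'N \<times> 'p::finite)^('N \<times> 'N \<times> 'p)) \<Rightarrow> bool" where
  "is_Ladj \<zeta> f \<longleftrightarrow> L2_on Omega \<zeta> \<and> L2_on Omega f
     \<and> (AE x in lebesgue_on Omega. symmetric_mat (f x))
     \<and> (\<forall>w. test_fun w \<longrightarrow>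
          (LINT x|lebesgue_on Omega. Lop w x \<bullet> \<zeta> x) = (LINT x|lebesgue_on Omega. w x \<bullet> f x))"

definition eigenvalues_le :: "real^'i^'i \<Rightarrow> real \<Rightarrow> bool" where
  "eigenvalues_le M k \<longleftrightarrow> (\<forall>c v. v \<noteq> 0 \<and> M *v v = c *\<^sub>R v \<longrightarrow> c \<le> k)"

end

theory Submission
  imports Defs "HOL-Real_Asymp.Real_Asymp"
begin

(* Testing the adjoint identity with w = phi *R A, where A is symmetric and U A = 0, gives L w = 0,
   so the integral of phi (A : L^* zeta) vanishes for every smooth periodic phi. Products of periodic
   bumps converge to indicators of boxes, hence L^* zeta(x) is, for a.e. x, orthogonal to the symmetric
   part of ker U. As U^* v = arrow_blocks v / 2, such a symmetric matrix is an arrow-block matrix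
   arrow_blocks d. For N > 1 each block of it has a nonpositive eigenvalue mu with
   mu^2 = d_j mu + sum_{i ~= j} d_i^2, so an upper bound k on the eigenvalues of -L^* zeta gives
   sum_{i ~= j} d_i^2 <= k |d_j| + k^2 for every j, which forces |d_i| <= 2k. All entries are then
   bounded by 2k and every eigenvalue of L^* zeta by n * 2k. *)

section \<open>Arrow-block matrices and the kernel of U\<close>

(* The block (j, l) is the arrowhead matrix with entries d_i at positions (j, i) and (i, j), and no
   other nonzero entries; by inner_Uop, arrow_blocks v is twice the adjoint U^* v. *)
definition arrow_blocks :: "real^'N::finite \<Rightarrow> real^('N \<times> 'N \<times> 'p::finite)^('N \<times> 'N \<times> 'p)" where
  "arrow_blocks d = (\<chi> x y. case (x, y) of ((i, j, l), (i', j', l')) \<Rightarrow>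
     if (j, l) = (j', l') \<and> (i = j \<or> i' = j) then d $ (if i = j then i' else i) else 0)"

lemma arrow_blocks_nth: "arrow_blocks d $ (i, j, l) $ (i', j', l') =
   (if (j, l) = (j', l') \<and> (i = j \<or> i' = j) then d $ (if i = j then i' else i) else 0)"
  by (simp add: arrow_blocks_def)

lemma sum_UNIV_triple: "(\<Sum>x\<in>UNIV. f x) = (\<Sum>i\<in>UNIV. \<Sum>j\<in>UNIV. \<Sum>l\<in>UNIV. f (i, j, l))"
  for f :: "'a::finite \<times> 'b::finite \<times> 'c::finite \<Rightarrow> 'd::comm_monoid_add"
  by (simp add: UNIV_Times_UNIV[symmetric] sum.cartesian_product del: UNIV_Times_UNIV)

lemma sum_delta_pair:
  "(\<Sum>a\<in>UNIV. \<Sum>b\<in>UNIV. if j = a \<and> l = b \<and> P a b then f a b else 0) = (if P j l then f j l else 0)"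
  for f :: "'a::finite \<Rightarrow> 'b::finite \<Rightarrow> 'c::comm_monoid_add"
proof -
  have "(\<Sum>a\<in>UNIV. \<Sum>b\<in>UNIV. if j = a \<and> l = b \<and> P a b then f a b else 0)
      = (\<Sum>x\<in>UNIV \<times> UNIV. if x = (j, l) then (if P j l then f j l else 0) else 0)"
    unfolding sum.cartesian_product by (intro sum.cong) (auto split: if_splits)
  then show ?thesis by simp
qed

lemma sum_swap3: "(\<Sum>i\<in>A. \<Sum>j\<in>B. \<Sum>l\<in>C. f i j l) = (\<Sum>j\<in>B. \<Sum>l\<in>C. \<Sum>i\<in>A. f i j l)"
  by (subst sum.swap) (rule sum.cong[OF refl], rule sum.swap)

lemma inner_arrow_blocks:
  "A \<bullet> arrow_blocks v = (\<Sum>l\<in>UNIV. \<Sum>j\<in>UNIV. \<Sum>i\<in>UNIV.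
     (A$(j,j,l)$(i,j,l) + (if i = j then 0 else A$(i,j,l)$(j,j,l))) * v $ i)"
proof -
  have "A \<bullet> arrow_blocks v = (\<Sum>i\<in>UNIV. \<Sum>j\<in>UNIV. \<Sum>l\<in>UNIV. \<Sum>i'\<in>UNIV.
     if i = j \<or> i' = j then A$(i,j,l)$(i',j,l) * v $ (if i = j then i' else i) else 0)"
    by (simp add: inner_vec_def sum_UNIV_triple arrow_blocks_nth sum_delta_pair
       if_distrib[of "\<lambda>t. _ * t"] cong: if_cong)
  also have "\<dots> = (\<Sum>j\<in>UNIV. \<Sum>l\<in>UNIV. \<Sum>i\<in>UNIV. \<Sum>i'\<in>UNIV.
     if i = j \<or> i' = j then A$(i,j,l)$(i',j,l) * v $ (if i = j then i' else i) else 0)"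
    by (rule sum_swap3)
  also have "\<dots> = (\<Sum>j\<in>UNIV. \<Sum>l\<in>UNIV. (\<Sum>i\<in>UNIV. A$(j,j,l)$(i,j,l) * v $ i)
      + (\<Sum>i\<in>UNIV. if i = j then 0 else A$(i,j,l)$(j,j,l) * v $ i))"
  proof (intro sum.cong refl)
    fix j l
    have "(\<Sum>i'\<in>UNIV. if i = j \<or> i' = j then A$(i,j,l)$(i',j,l) * v $ (if i = j then i' else i) else 0)
        = (if i = j then (\<Sum>i'\<in>UNIV. A$(j,j,l)$(i',j,l) * v $ i') else A$(i,j,l)$(j,j,l) * v $ i)" for i
      by (cases "i = j") simp_all
    then show "(\<Sum>i\<in>UNIV. \<Sum>i'\<in>UNIV. if i = j \<or> i' = j then A$(i,j,l)$(i',j,l) * v $ (if i = j then i' else i) else 0)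
        = (\<Sum>i\<in>UNIV. A$(j,j,l)$(i,j,l) * v $ i) + (\<Sum>i\<in>UNIV. if i = j then 0 else A$(i,j,l)$(j,j,l) * v $ i)"
      by (simp add: sum.If_cases)
  qed
  also have "\<dots> = (\<Sum>j\<in>UNIV. \<Sum>l\<in>UNIV. \<Sum>i\<in>UNIV.
     (A$(j,j,l)$(i,j,l) + (if i = j then 0 else A$(i,j,l)$(j,j,l))) * v $ i)"
    by (auto simp: sum.distrib distrib_right intro!: sum.cong)
  also have "\<dots> = (\<Sum>l\<in>UNIV. \<Sum>j\<in>UNIV. \<Sum>i\<in>UNIV.
     (A$(j,j,l)$(i,j,l) + (if i = j then 0 else A$(i,j,l)$(j,j,l))) * v $ i)"
    by (rule sum.swap)
  finally show ?thesis .
qed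

lemma inner_Uop: "Uop A \<bullet> v = (A \<bullet> arrow_blocks v) / 2"
proof -
  have "A$(i,i,l)$(i,i,l) + (\<Sum>j\<in>UNIV - {i}. A$(j,j,l)$(i,j,l) + A$(i,j,l)$(j,j,l))
     = (\<Sum>j\<in>UNIV. A$(j,j,l)$(i,j,l) + (if i = j then 0 else A$(i,j,l)$(j,j,l)))" for i l
    by (simp add: sum.remove[of UNIV i] sum.If_cases)
  then have "Uop A \<bullet> v = (\<Sum>i\<in>UNIV. \<Sum>l\<in>UNIV. \<Sum>j\<in>UNIV.
     (A$(j,j,l)$(i,j,l) + (if i = j then 0 else A$(i,j,l)$(j,j,l))) * v $ i) / 2"
    by (simp add: inner_vec_def Uop_def sum_distrib_left sum_divide_distrib mult.commute)
  also have "\<dots> = (A \<bullet> arrow_blocks v) / 2"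
    unfolding inner_arrow_blocks by (subst sum_swap3) (rule refl)
  finally show ?thesis .
qed

lemma symmetric_mat_iff: "symmetric_mat A \<longleftrightarrow> (\<forall>i j. A$i$j = A$j$i)"
  unfolding symmetric_mat_def transpose_def vec_eq_iff by auto

lemma arrow_blocks_nth_swap: "arrow_blocks d $ x $ y = arrow_blocks d $ y $ x"
proof -
  obtain i j l i' j' l' where "x = (i, j, l)" "y = (i', j', l')" by (metis prod_cases3)
  then show ?thesis by (cases "j = j'"; cases "l = l'") (simp_all add: arrow_blocks_nth)
qed

lemma symmetric_arrow_blocks: "symmetric_mat (arrow_blocks d)"
  unfolding symmetric_mat_iff by (metis arrow_blocks_nth_swap)

lemma linear_arrow_blocks: "linear arrow_blocks"
  by (rule linearI) (simp_all add: vec_eq_iff arrow_blocks_nth)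

lemma Uop_add: "Uop (A + B) = Uop A + Uop B"
  by (simp add: Uop_def vec_eq_iff sum.distrib algebra_simps)

lemma Uop_scaleR: "Uop (c *\<^sub>R A) = c *\<^sub>R Uop A"
  by (simp add: Uop_def vec_eq_iff sum_distrib_left algebra_simps)

lemma Uop_eq_0_iff: "Uop A = 0 \<longleftrightarrow> (\<forall>v. A \<bullet> arrow_blocks v = 0)"
proof
  assume "\<forall>v. A \<bullet> arrow_blocks v = 0"
  then have "Uop A \<bullet> Uop A = 0" by (simp add: inner_Uop)
  then show "Uop A = 0" by simp
qed (use inner_Uop[of A] in simp)

lemma Uop_0: "Uop 0 = 0"
  by (simp add: Uop_def vec_eq_iff)

lemma subspace_symmetric_kernel_Uop: "subspace {A. symmetric_mat A \<and> Uop A = 0}"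
  by (simp add: subspace_def symmetric_mat_iff Uop_0 Uop_add Uop_scaleR)

lemma ex_arrow_blocks_if_orthogonal_kernel_Uop:
  assumes sym: "symmetric_mat B" and orth: "\<And>A. symmetric_mat A \<Longrightarrow> Uop A = 0 \<Longrightarrow> A \<bullet> B = 0"
  shows "\<exists>d. B = arrow_blocks d"
proof -
  obtain y z where y: "y \<in> span (range arrow_blocks)" and z: "\<And>w. w \<in> span (range arrow_blocks) \<Longrightarrow> z \<bullet> w = 0"
    and B: "B = y + z"
    using orthogonal_subspace_decomp_exists[of "range arrow_blocks" B] unfolding orthogonal_def by metis
  have span: "span (range arrow_blocks) = range arrow_blocks"
    using span_linear_image[OF linear_arrow_blocks, of UNIV] by simp
  obtain d where d: "y = arrow_blocks d" using y unfolding span by blast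
  have "z = B - arrow_blocks d" using B d by simp
  then have "symmetric_mat z" using sym symmetric_arrow_blocks[of d] by (simp add: symmetric_mat_iff)
  moreover have "Uop z = 0" unfolding Uop_eq_0_iff by (auto intro: z span_base)
  ultimately have "z \<bullet> B = 0" by (rule orth)
  moreover have "z \<bullet> y = 0" using z y by blast
  ultimately have "z = 0" using B by (simp add: inner_add_right)
  then show ?thesis using B d by auto
qed

section \<open>Spectral bounds for arrow-block matrices\<close>

lemma arrow_blocks_mult_nth:
  "(arrow_blocks d *v v) $ (i, j, l) =
     (if i = j then (\<Sum>i'\<in>UNIV. d $ i' * v $ (i', j, l)) else d $ i * v $ (j, j, l))"
proof -
  have "(arrow_blocks d *v v) $ (i, j, l) = (\<Sum>i'\<in>UNIV.
      if i = j \<or> i' = j then d $ (if i = j then i' else i) * v $ (i', j, l) else 0)"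
    by (simp add: matrix_vector_mult_def sum_UNIV_triple arrow_blocks_nth sum_delta_pair
       if_distrib[of "\<lambda>t. t * _"] cong: if_cong)
  then show ?thesis by (cases "i = j") simp_all
qed

lemma arrow_blocks_nonpos_eigenvalue:
  fixes d :: "real^'N::finite"
  assumes "i \<noteq> j"
  obtains \<mu> and v :: "real^('N \<times> 'N \<times> 'p::finite)"
  where "\<mu> \<le> 0" "\<mu>\<^sup>2 = d $ j * \<mu> + (\<Sum>i\<in>UNIV - {j}. (d $ i)\<^sup>2)"
    "v \<noteq> 0" "arrow_blocks d *v v = \<mu> *\<^sub>R v"
proof -
  define S where "S = (\<Sum>i\<in>UNIV - {j}. (d $ i)\<^sup>2)"
  define \<mu> where "\<mu> = (d $ j - sqrt ((d $ j)\<^sup>2 + 4 * S)) / 2"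
  have "S \<ge> 0" unfolding S_def by (simp add: sum_nonneg)
  then have sq: "(sqrt ((d $ j)\<^sup>2 + 4 * S))\<^sup>2 = (d $ j)\<^sup>2 + 4 * S" by simp
  have "d $ j \<le> sqrt ((d $ j)\<^sup>2 + 4 * S)"
    using \<open>S \<ge> 0\<close> by (intro real_le_rsqrt) simp
  then have \<mu>0: "\<mu> \<le> 0" unfolding \<mu>_def by simp
  have quad: "\<mu>\<^sup>2 = d $ j * \<mu> + S"
    unfolding \<mu>_def using sq by (simp add: power2_eq_square field_simps)
  define l :: 'p where "l = undefined" \<comment> \<open>every block (j, l) carries the eigenvalue\<close>
  define v :: "real^('N \<times> 'N \<times> 'p)"
    where "v = (\<chi> y. case y of (i', j', l') \<Rightarrow> if (j', l') = (j, l) then (if i' = j then \<mu> else d $ i') else 0)"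
  have "arrow_blocks d *v v = \<mu> *\<^sub>R v"
  proof -
    have "(\<Sum>i'\<in>UNIV. d $ i' * (if i' = j then \<mu> else d $ i')) = d $ j * \<mu> + S"
      unfolding S_def by (simp add: sum.remove[of UNIV j] power2_eq_square)
    then show ?thesis
      using quad by (auto simp: vec_eq_iff arrow_blocks_mult_nth v_def power2_eq_square mult.commute cong: if_cong)
  qed
  show thesis
  proof (cases "v = 0")
    case False
    then show thesis using that \<mu>0 quad \<open>arrow_blocks d *v v = \<mu> *\<^sub>R v\<close> unfolding S_def by blast
  next
    case True \<comment> \<open>then \<mu> = 0, and the basis vector at (i, j, l) is a kernel vector\<close>
    then have "v $ (j, j, l) = 0" "v $ (i, j, l) = 0" by simp_all
    then have "\<mu> = 0" "d $ i = 0" using assms by (simp_all add: v_def)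
    moreover have "arrow_blocks d *v axis (i, j, l) 1 = 0 *\<^sub>R axis (i, j, l) 1"
      using assms \<open>d $ i = 0\<close> by (auto simp: vec_eq_iff arrow_blocks_mult_nth axis_def intro!: sum.neutral)
    ultimately show thesis using that quad \<mu>0 unfolding S_def by (metis axis_eq_0_iff zero_neq_one)
  qed
qed

lemma abs_le_twice_if_squares_le:
  fixes a b k :: real
  assumes "0 \<le> k" "a\<^sup>2 \<le> k * \<bar>b\<bar> + k\<^sup>2" "b\<^sup>2 \<le> k * \<bar>a\<bar> + k\<^sup>2"
  shows "\<bar>a\<bar> \<le> 2 * k"
proof -
  define m where "m = max \<bar>a\<bar> \<bar>b\<bar>"
  have "m\<^sup>2 \<le> k * m + k\<^sup>2"
  proof (cases "\<bar>b\<bar> \<le> \<bar>a\<bar>")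
    case True
    then have "k * \<bar>b\<bar> \<le> k * \<bar>a\<bar>" using assms(1) by (rule mult_left_mono)
    then show ?thesis using True assms(2) by (simp add: m_def max_def)
  next
    case False
    then have "k * \<bar>a\<bar> \<le> k * \<bar>b\<bar>" using assms(1) by (intro mult_left_mono) auto
    then show ?thesis using False assms(3) by (simp add: m_def max_def)
  qed
  moreover have "k * m + k\<^sup>2 < m\<^sup>2" if "2 * k < m"
  proof -
    have "0 < (m - 2 * k) * (m + k)" using that assms(1) by (intro mult_pos_pos) linarith+
    moreover have "m * m - k * m - k * k = (m - 2 * k) * (m + k) + k * k" by (simp add: algebra_simps)
    ultimately show ?thesis unfolding power2_eq_square using zero_le_square[of k] by linarith
  qed
  ultimately have "m \<le> 2 * k" by (meson leD not_le)
  then show ?thesis unfolding m_def by simp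
qed

lemma ex_neq_if_card_gt_1:
  assumes "CARD('a::finite) > 1"
  shows "\<exists>j::'a. j \<noteq> i"
proof (rule ccontr)
  assume "\<nexists>j. j \<noteq> i"
  then have "UNIV = {i}" by auto
  then have "CARD('a) = card {i}" by (rule arg_cong)
  then show False using assms by simp
qed

lemma matrix_vector_mult_uminus: "(- A) *v v = - (A *v v)" for A :: "'a::ring_1^'n^'m"
  by (simp add: matrix_vector_mult_def vec_eq_iff sum_negf)

lemma abs_arrow_blocks_param_le:
  fixes d :: "real^'N::finite"
  assumes N: "CARD('N) > 1" and eig: "eigenvalues_le (- (arrow_blocks d :: real^('N \<times> 'N \<times> 'p::finite)^_)) k"
  shows "\<bar>d $ i\<bar> \<le> 2 * k"
proof -
  have S: "0 \<le> k \<and> (\<Sum>i\<in>UNIV - {j}. (d $ i)\<^sup>2) \<le> k * \<bar>d $ j\<bar> + k\<^sup>2" for j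
  proof -
    obtain i where "i \<noteq> j" using ex_neq_if_card_gt_1[OF N] by blast
    then obtain \<mu> and v :: "real^('N \<times> 'N \<times> 'p)" where \<mu>: "\<mu> \<le> 0"
        "\<mu>\<^sup>2 = d $ j * \<mu> + (\<Sum>i\<in>UNIV - {j}. (d $ i)\<^sup>2)" and "v \<noteq> 0" "arrow_blocks d *v v = \<mu> *\<^sub>R v"
      by (rule arrow_blocks_nonpos_eigenvalue)
    then have "(- arrow_blocks d) *v v = (- \<mu>) *\<^sub>R v" by (simp add: matrix_vector_mult_uminus)
    then have "- \<mu> \<le> k" using eig \<open>v \<noteq> 0\<close> unfolding eigenvalues_le_def by blast
    moreover have "(- \<mu>)\<^sup>2 \<le> k\<^sup>2" using \<open>- \<mu> \<le> k\<close> \<mu>(1) by (intro power_mono) auto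
    moreover have "d $ j * (- \<mu>) \<le> \<bar>d $ j\<bar> * k"
      using \<open>- \<mu> \<le> k\<close> \<mu>(1) by (intro mult_mono) auto
    ultimately show ?thesis using \<mu>(1,2) by (simp add: algebra_simps)
  qed
  obtain j where "j \<noteq> i" using ex_neq_if_card_gt_1[OF N] by blast
  have "(d $ i)\<^sup>2 \<le> (\<Sum>i\<in>UNIV - {j}. (d $ i)\<^sup>2)" "(d $ j)\<^sup>2 \<le> (\<Sum>j\<in>UNIV - {i}. (d $ j)\<^sup>2)"
    using \<open>j \<noteq> i\<close> by (auto intro: member_le_sum)
  then show ?thesis using S[of i] S[of j] by (intro abs_le_twice_if_squares_le[where b = "d $ j"]) linarith+
qed

lemma eigenvalue_le_card_mult_entry_bound:
  fixes B :: "real^'n::finite^'n"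
  assumes K: "\<And>x y. \<bar>B $ x $ y\<bar> \<le> K" and "v \<noteq> 0" and eigen: "B *v v = c *\<^sub>R v"
  shows "c \<le> real CARD('n) * K"
proof -
  define m where "m = Max (range (\<lambda>x. \<bar>v $ x\<bar>))"
  have "m \<in> range (\<lambda>x. \<bar>v $ x\<bar>)" unfolding m_def by (rule Max_in) auto
  then obtain a where "m = \<bar>v $ a\<bar>" by blast
  moreover have "\<bar>v $ x\<bar> \<le> m" for x unfolding m_def by (rule Max_ge) auto
  ultimately have a: "\<bar>v $ x\<bar> \<le> \<bar>v $ a\<bar>" for x by simp
  obtain x where "v $ x \<noteq> 0" using \<open>v \<noteq> 0\<close> by (auto simp: vec_eq_iff)
  then have "\<bar>v $ a\<bar> > 0" using a[of x] zero_less_abs_iff[of "v $ x"] by linarith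
  have "c * v $ a = (\<Sum>y\<in>UNIV. B $ a $ y * v $ y)"
    using arg_cong[OF eigen, of "\<lambda>w. w $ a"] by (simp add: matrix_vector_mult_def)
  then have "\<bar>c\<bar> * \<bar>v $ a\<bar> = \<bar>\<Sum>y\<in>UNIV. B $ a $ y * v $ y\<bar>" by (metis abs_mult)
  also have "\<dots> \<le> (\<Sum>y\<in>UNIV. \<bar>B $ a $ y\<bar> * \<bar>v $ y\<bar>)"
    using sum_abs[of "\<lambda>y. B $ a $ y * v $ y" UNIV] by (simp add: abs_mult)
  also have "\<dots> \<le> (\<Sum>y::'n\<in>UNIV. K * \<bar>v $ a\<bar>)"
    using K a by (intro sum_mono mult_mono) (auto intro: order_trans[OF abs_ge_zero K])
  also have "\<dots> = real CARD('n) * K * \<bar>v $ a\<bar>" by simp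
  finally have "\<bar>c\<bar> \<le> real CARD('n) * K" using \<open>\<bar>v $ a\<bar> > 0\<close> by simp
  then show ?thesis by linarith
qed

lemma eigenvalues_le_arrow_blocks:
  fixes d :: "real^'N::finite"
  assumes "CARD('N) > 1" and "eigenvalues_le (- (arrow_blocks d :: real^('N \<times> 'N \<times> 'p::finite)^_)) k"
  shows "eigenvalues_le (arrow_blocks d :: real^('N \<times> 'N \<times> 'p)^_) (real CARD('N \<times> 'N \<times> 'p) * (2 * k))"
proof -
  have d: "\<bar>d $ i\<bar> \<le> 2 * k" for i using abs_arrow_blocks_param_le[OF assms] .
  have "\<bar>arrow_blocks d $ x $ y\<bar> \<le> 2 * k" for x y :: "'N \<times> 'N \<times> 'p"
  proof -
    obtain i j l i' j' l' where xy: "x = (i, j, l)" "y = (i', j', l')" by (metis prod_cases3)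
    have "0 \<le> k" using d[of i] abs_ge_zero[of "d $ i"] by linarith
    then show ?thesis by (simp add: xy arrow_blocks_nth d)
  qed
  then show ?thesis
    unfolding eigenvalues_le_def by (metis eigenvalue_le_card_mult_entry_bound)
qed

section \<open>Functions whose integrals over all boxes vanish\<close>

lemma borel_box_induct[consumes 1, case_names empty box compl union]:
  fixes A :: "'a::euclidean_space set"
  assumes "A \<in> sets borel"
    and empty: "P {}" and box: "\<And>a b. P (box a b)"
    and compl: "\<And>A. A \<in> sets borel \<Longrightarrow> P A \<Longrightarrow> P (- A)"
    and un: "\<And>F. disjoint_family F \<Longrightarrow> (\<And>i. F i \<in> sets borel) \<Longrightarrow> (\<And>i. P (F i)) \<Longrightarrow> P (\<Union>i::nat. F i)"
  shows "P A"
proof -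
  let ?G = "range (\<lambda>(a, b). box a b :: 'a set)"
  have sets: "sets borel = sigma_sets UNIV ?G"
    by (subst borel_eq_box) (simp add: sets_measure_of)
  have "Int_stable ?G" "?G \<subseteq> Pow UNIV" "A \<in> sigma_sets UNIV ?G"
    using assms(1) by (auto simp: Int_stable_def box_Int_box sets)
  then show ?thesis
  proof (induction rule: sigma_sets_induct_disjoint)
    case (union F)
    then show ?case by (intro un) (auto simp: sets)
  qed (auto intro: empty box compl simp: Compl_eq_Diff_UNIV[symmetric] sets)
qed

lemma set_integral_eq_0_if_box_integrals_eq_0:
  fixes G :: "'a::euclidean_space \<Rightarrow> real"
  assumes G: "integrable lborel G" and boxes: "\<And>a b. (LINT x:box a b|lborel. G x) = 0"
    and A: "A \<in> sets borel"
  shows "(LINT x:A|lborel. G x) = 0"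
proof -
  have int: "set_integrable lborel B G" if "B \<in> sets borel" for B
    using G that unfolding set_integrable_def by (intro integrable_mult_indicator) auto
  have UNIV: "(LINT x:UNIV|lborel. G x) = 0"
  proof -
    let ?B = "\<lambda>i::nat. box (- (real i *\<^sub>R One)) (real i *\<^sub>R One) :: 'a set"
    have "incseq ?B" by (auto simp: incseq_def subset_box)
    then have "(\<lambda>i. LINT x:?B i|lborel. G x) \<longlonglongrightarrow> (LINT x:(\<Union>i. ?B i)|lborel. G x)"
      using int by (intro set_integral_cont_up) auto
    then show ?thesis using boxes by (simp add: UN_box_eq_UNIV LIMSEQ_const_iff)
  qed
  from A show ?thesis
  proof (induction rule: borel_box_induct)
    case (compl A)
    have "(LINT x:A \<union> - A|lborel. G x) = (LINT x:A|lborel. G x) + (LINT x:- A|lborel. G x)"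
      using compl by (intro set_integral_Un int) auto
    then show ?case using compl UNIV by simp
  next
    case (union F)
    have "(LINT x:(\<Union>i. F i)|lborel. G x) = (\<Sum>i. LINT x:F i|lborel. G x)"
      using union by (intro lebesgue_integral_countable_add int) (auto simp: disjoint_family_on_def)
    then show ?case using union by simp
  next
    case (box a b)
    show ?case by (rule boxes)
  qed (simp add: set_lebesgue_integral_def)
qed

lemma AE_lborel_eq_0_if_box_integrals_eq_0:
  fixes G :: "'a::euclidean_space \<Rightarrow> real"
  assumes "integrable lborel G" and "\<And>a b. (LINT x:box a b|lborel. G x) = 0"
  shows "AE x in lborel. G x = 0"
  using assms(1) by (rule sigma_finite_measure.density_zero[OF sigma_finite_lborel])
    (simp add: set_integral_eq_0_if_box_integrals_eq_0 assms)

lemma AE_lebesgue_on_eq_0_if_box_integrals_eq_0: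
  fixes g :: "'a::euclidean_space \<Rightarrow> real"
  assumes S: "S \<in> sets lebesgue" and g: "integrable (lebesgue_on S) g"
    and boxes: "\<And>a b. (LINT x|lebesgue_on S. indicator (box a b) x * g x) = 0"
  shows "AE x in lebesgue_on S. g x = 0"
proof -
  define G where "G x = indicator S x * g x" for x
  have S': "S \<inter> space lebesgue \<in> sets lebesgue" using S by simp
  have G_int: "integrable lebesgue G" using g unfolding G_def integrable_restrict_space[OF S'] by simp
  then have "G \<in> borel_measurable (completion lborel)" by auto
  then obtain G' where G'_meas: "G' \<in> borel_measurable lborel" and "AE x in lborel. G x = G' x"
    using completion_ex_borel_measurable_real by blast
  then have G'_ae: "AE x in lebesgue. G x = G' x" by (blast intro: AE_completion)
  have "integrable lebesgue G'"
    using integrable_cong_AE[OF borel_measurable_integrable[OF G_int] measurable_completion[OF G'_meas] G'_ae] G_int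
    by simp
  then have G'_int: "integrable lborel G'" using G'_meas integrable_completion by blast
  have "(LINT x:box a b|lborel. G' x) = 0" for a b
  proof -
    have meas: "(\<lambda>x. indicator (box a b) x * G' x) \<in> borel_measurable lborel"
      using G'_meas by measurable
    have "(LINT x:box a b|lborel. G' x) = (LINT x|lebesgue. indicator (box a b) x * G' x)"
      using integral_completion[OF meas] by (simp add: set_lebesgue_integral_def)
    also have "\<dots> = (LINT x|lebesgue. indicator (box a b) x * G x)"
    proof (rule integral_cong_AE)
      show "(\<lambda>x. indicator (box a b) x * G x) \<in> borel_measurable lebesgue"
        by (intro borel_measurable_times[OF borel_measurable_indicator borel_measurable_integrable[OF G_int]]) simp
      show "AE x in lebesgue. indicator (box a b) x * G' x = indicator (box a b) x * G x"
        using G'_ae by eventually_elim simp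
    qed (rule measurable_completion[OF meas])
    also have "\<dots> = (LINT x|lebesgue_on S. indicator (box a b) x * g x)"
      unfolding integral_restrict_space[OF S'] G_def by (simp add: mult.left_commute)
    finally show ?thesis using boxes by simp
  qed
  then have "AE x in lborel. G' x = 0" using G'_int by (intro AE_lborel_eq_0_if_box_integrals_eq_0)
  then have "AE x in lebesgue. G' x = 0" by (rule AE_completion)
  with G'_ae have "AE x in lebesgue. G x = 0" by eventually_elim simp
  then show ?thesis unfolding AE_restrict_space_iff[OF S'] G_def by eventually_elim (auto simp: indicator_def)
qed

section \<open>Smooth periodic bumps\<close>

lemma C1_differentiable_on_UNIV_realI:
  fixes f :: "real \<Rightarrow> real"
  assumes "\<And>x. (f has_real_derivative f' x) (at x)" and "continuous_on UNIV f'"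
  shows "f C1_differentiable_on UNIV"
  using assms unfolding C1_differentiable_on_def has_real_derivative_iff_has_vector_derivative by blast

lemma C1_differentiable_on_compose_UNIV:
  fixes f g :: "real \<Rightarrow> real"
  assumes f: "f C1_differentiable_on UNIV" and g: "g C1_differentiable_on UNIV"
  shows "(\<lambda>x. g (f x)) C1_differentiable_on UNIV"
proof -
  obtain f' where f': "\<And>x. (f has_real_derivative f' x) (at x)" "continuous_on UNIV f'"
    using f unfolding C1_differentiable_on_def has_real_derivative_iff_has_vector_derivative by blast
  obtain g' where g': "\<And>x. (g has_real_derivative g' x) (at x)" "continuous_on UNIV g'"
    using g unfolding C1_differentiable_on_def has_real_derivative_iff_has_vector_derivative by blast
  have "continuous_on UNIV f" using C1_diff_imp_diff[OF f] by (rule differentiable_imp_continuous_on)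
  then have "continuous_on UNIV (\<lambda>x. g' (f x) * f' x)"
    by (intro continuous_intros continuous_on_compose2[OF g'(2)] f') auto
  then show ?thesis
    by (rule C1_differentiable_on_UNIV_realI[rotated]) (rule DERIV_chain2[OF g'(1) f'(1)])
qed

lemma C1_differentiable_on_cos: "cos C1_differentiable_on UNIV"
  by (rule C1_differentiable_on_UNIV_realI[OF DERIV_cos]) (intro continuous_intros)

definition smooth_step :: "nat \<Rightarrow> real \<Rightarrow> real" where
  "smooth_step n s = exp (- real n * exp (- real n * s))"

lemma C1_differentiable_on_smooth_step: "smooth_step n C1_differentiable_on UNIV"
proof (rule C1_differentiable_on_UNIV_realI)
  show "(smooth_step n has_real_derivative smooth_step n s * (real n ^ 2 * exp (- real n * s))) (at s)" for s
    unfolding smooth_step_def[abs_def] by (rule derivative_eq_intros refl | simp add: power2_eq_square)+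
qed (unfold smooth_step_def, intro continuous_intros)

lemma smooth_step_nonneg: "0 \<le> smooth_step n s"
  and smooth_step_le_1: "smooth_step n s \<le> 1"
  unfolding smooth_step_def by auto

lemma smooth_step_tendsto: "(\<lambda>n. smooth_step n s) \<longlonglongrightarrow> (if s > 0 then 1 else 0)"
proof -
  consider "s > 0" | "s = 0" | "s < 0" by linarith
  then show ?thesis
  proof cases
    case 1
    then show ?thesis unfolding smooth_step_def by simp real_asymp
  next
    case 2
    then show ?thesis unfolding smooth_step_def by simp real_asymp
  next
    case 3
    then show ?thesis unfolding smooth_step_def by simp real_asymp
  qed
qed

lemma cos_less_cos_iff_abs_less:
  fixes u d :: real
  assumes "0 < d" "d \<le> 1/2" "\<bar>u\<bar> \<le> 1 - d"
  shows "cos (2 * pi * d) < cos (2 * pi * u) \<longleftrightarrow> \<bar>u\<bar> < d"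
proof -
  have cos_abs: "cos (2 * pi * u) = cos (2 * pi * \<bar>u\<bar>)"
    by (simp add: abs_if)
  have d: "0 \<le> 2 * pi * d" "2 * pi * d \<le> pi" using assms(1,2) by (simp_all add: field_simps)
  show ?thesis
  proof (cases "\<bar>u\<bar> \<le> 1/2")
    case True
    then have "2 * pi * \<bar>u\<bar> \<le> pi" by (simp add: field_simps)
    then show ?thesis unfolding cos_abs using d by (subst cos_mono_less_eq) simp_all
  next
    case False
    have "cos (2 * pi * \<bar>u\<bar>) = cos (2 * pi * (1 - \<bar>u\<bar>))"
      using cos_2pi_minus[of "2 * pi * \<bar>u\<bar>"] by (simp add: right_diff_distrib)
    also have "\<dots> \<le> cos (2 * pi * d)"
    proof (rule cos_monotone_0_pi_le)
      show "2 * pi * d \<le> 2 * pi * (1 - \<bar>u\<bar>)" using assms(3) by (intro mult_left_mono) auto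
      show "2 * pi * (1 - \<bar>u\<bar>) \<le> pi" using False by (simp add: field_simps)
    qed (rule d(1))
    finally show ?thesis using False assms(2) cos_abs by auto
  qed
qed

(* The argument of smooth_step is positive exactly when t is closer, modulo 1, to the midpoint of
   (max a 0, min b 1) than half its length; so on (0, 1) the bumps tend to the indicator of (a, b). *)
definition periodic_bump :: "nat \<Rightarrow> real \<Rightarrow> real \<Rightarrow> real \<Rightarrow> real" where
  "periodic_bump n a b t = (let p = max a 0; q = min b 1 in
     if q \<le> p then 0 else smooth_step n (cos (2 * pi * (t - (p + q) / 2)) - cos (2 * pi * ((q - p) / 2))))"

lemma C1_differentiable_on_periodic_bump: "periodic_bump n a b C1_differentiable_on UNIV"
proof -
  have "(\<lambda>t. smooth_step n (cos (2 * pi * (t - c)) - r)) C1_differentiable_on UNIV" for c r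
    by (intro C1_differentiable_on_compose_UNIV[OF _ C1_differentiable_on_smooth_step]
        C1_differentiable_on_diff C1_differentiable_on_const
        C1_differentiable_on_compose_UNIV[OF _ C1_differentiable_on_cos]
        C1_differentiable_on_mult C1_differentiable_on_ident)
  then show ?thesis unfolding periodic_bump_def[abs_def] Let_def by (cases "min b 1 \<le> max a 0") simp_all
qed

lemma periodic_bump_nonneg: "0 \<le> periodic_bump n a b t"
  and periodic_bump_le_1: "periodic_bump n a b t \<le> 1"
  unfolding periodic_bump_def Let_def by (simp_all add: smooth_step_nonneg smooth_step_le_1)

lemma periodic_bump_add_Ints:
  assumes "z \<in> \<int>" shows "periodic_bump n a b (t + z) = periodic_bump n a b t"
proof -
  obtain m where z: "z = of_int m" using assms by (auto elim: Ints_cases)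
  have "cos (2 * pi * (t + z - c)) = cos (2 * pi * (t - c))" for c
  proof -
    have "2 * pi * (t + z - c) = 2 * pi * (t - c) + 2 * pi * of_int m" by (simp add: z algebra_simps)
    then show ?thesis by (simp add: cos_add)
  qed
  then show ?thesis unfolding periodic_bump_def Let_def by simp
qed

lemma periodic_bump_tendsto:
  assumes "0 < t" "t < 1"
  shows "(\<lambda>n. periodic_bump n a b t) \<longlonglongrightarrow> indicator {a<..<b} t"
proof -
  define p q where "p = max a 0" and "q = min b 1"
  have iff: "t \<in> {a<..<b} \<longleftrightarrow> p < t \<and> t < q" unfolding p_def q_def using assms by auto
  show ?thesis
  proof (cases "q \<le> p")
    case True
    then show ?thesis using iff unfolding periodic_bump_def Let_def p_def[symmetric] q_def[symmetric] by simp
  next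
    case False
    let ?u = "t - (p + q) / 2" and ?d = "(q - p) / 2"
    let ?s = "cos (2 * pi * ?u) - cos (2 * pi * ?d)"
    have "0 \<le> p" "q \<le> 1" unfolding p_def q_def by simp_all
    then have "\<bar>?u\<bar> \<le> 1 - ?d" using assms by (auto simp: abs_le_iff field_simps)
    then have "0 < ?s \<longleftrightarrow> \<bar>?u\<bar> < ?d"
      using False \<open>0 \<le> p\<close> \<open>q \<le> 1\<close> cos_less_cos_iff_abs_less[of ?d ?u] by auto
    also have "\<dots> \<longleftrightarrow> t \<in> {a<..<b}" unfolding iff by (auto simp: abs_less_iff field_simps)
    finally have "(if 0 < ?s then 1 else 0 :: real) = indicator {a<..<b} t" by simp
    moreover have "periodic_bump n a b t = smooth_step n ?s" for n
      using False unfolding periodic_bump_def Let_def p_def[symmetric] q_def[symmetric] by simp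
    ultimately show ?thesis using smooth_step_tendsto[of ?s] by simp
  qed
qed

lemma prod_UNIV_add_axis:
  fixes h :: "'d::finite \<Rightarrow> real \<Rightarrow> real"
  shows "(\<Prod>c'\<in>UNIV. h c' ((x + t *\<^sub>R axis c 1) $ c')) = h c (x $ c + t) * (\<Prod>c'\<in>UNIV - {c}. h c' (x $ c'))"
proof -
  have "(\<Prod>c'\<in>UNIV. h c' ((x + t *\<^sub>R axis c 1) $ c'))
      = h c (x $ c + t) * (\<Prod>c'\<in>UNIV - {c}. h c' ((x + t *\<^sub>R axis c 1) $ c'))"
    by (subst prod.remove[of UNIV c]) (simp_all add: axis_def)
  also have "(\<Prod>c'\<in>UNIV - {c}. h c' ((x + t *\<^sub>R axis c 1) $ c')) = (\<Prod>c'\<in>UNIV - {c}. h c' (x $ c'))"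
    by (intro prod.cong) (auto simp: axis_def)
  finally show ?thesis .
qed

lemma test_fun_scaleR_prod:
  fixes h :: "'N::finite \<times> 'p::finite \<Rightarrow> real \<Rightarrow> real" and A :: "real^('N \<times> 'N \<times> 'p)^('N \<times> 'N \<times> 'p)"
  assumes A: "symmetric_mat A" and C1: "\<And>c. h c C1_differentiable_on UNIV"
    and periodic: "\<And>c t z. z \<in> \<int> \<Longrightarrow> h c (t + z) = h c t"
  shows "test_fun (\<lambda>x. (\<Prod>c\<in>UNIV. h c (x $ c)) *\<^sub>R A)"
proof -
  have "\<forall>c. \<exists>D. (\<forall>t. (h c has_real_derivative D t) (at t)) \<and> continuous_on UNIV D"
    using C1 unfolding C1_differentiable_on_def has_real_derivative_iff_has_vector_derivative by blast
  then obtain D where D: "\<And>c t. (h c has_real_derivative D c t) (at t)" "\<And>c. continuous_on UNIV (D c)"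
    by metis
  have h_cont: "continuous_on UNIV (h c)" for c
    using C1_diff_imp_diff[OF C1] by (rule differentiable_imp_continuous_on)
  define R where "R c x = (\<Prod>c'\<in>UNIV - {c}. h c' (x $ c'))" for c and x :: "real^('N \<times> 'p)"
  have deriv: "((\<lambda>t. (\<Prod>c'\<in>UNIV. h c' ((x + t *\<^sub>R axis c 1) $ c')) *\<^sub>R A)
      has_vector_derivative (D c (x $ c) * R c x) *\<^sub>R A) (at 0)" for x c
  proof -
    have "((\<lambda>t. h c (x $ c + t)) has_real_derivative D c (x $ c + 0) * 1) (at 0)"
      by (rule DERIV_chain2[OF D(1)]) (auto intro!: derivative_eq_intros)
    then have "((\<lambda>t. h c (x $ c + t) * R c x) has_real_derivative D c (x $ c) * R c x) (at 0)"
      using DERIV_cmult_right by fastforce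
    then show ?thesis unfolding prod_UNIV_add_axis R_def[symmetric]
      by (intro has_vector_derivative_scaleR[OF _ has_vector_derivative_const, simplified])
        (simp add: has_real_derivative_iff_has_vector_derivative)
  qed
  show ?thesis
    unfolding test_fun_def
  proof (intro conjI allI impI)
    show "symmetric_mat ((\<Prod>c\<in>UNIV. h c (x $ c)) *\<^sub>R A)" for x
      using A by (simp add: symmetric_mat_def transpose_scalar)
    show "(\<Prod>c\<in>UNIV. h c ((x + z) $ c)) *\<^sub>R A = (\<Prod>c\<in>UNIV. h c (x $ c)) *\<^sub>R A"
      if "\<forall>c. z $ c \<in> \<int>" for x z
    proof -
      have "h c ((x + z) $ c) = h c (x $ c)" for c using that[rule_format, of c] periodic by simp
      then show ?thesis by simp
    qed
    show "(\<lambda>t. (\<Prod>c'\<in>UNIV. h c' ((x + t *\<^sub>R axis c 1) $ c')) *\<^sub>R A) differentiable at 0" for x c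
      using deriv by (rule differentiableI_vector)
    fix c
    have "partial_deriv (\<lambda>x. (\<Prod>c\<in>UNIV. h c (x $ c)) *\<^sub>R A) (axis c 1) = (\<lambda>x. (D c (x $ c) * R c x) *\<^sub>R A)"
      unfolding partial_deriv_def by (intro ext vector_derivative_at deriv)
    moreover have "continuous_on UNIV (\<lambda>x. (D c (x $ c) * R c x) *\<^sub>R A)"
      unfolding R_def by (intro continuous_intros continuous_on_compose2[OF D(2)]
          continuous_on_compose2[OF h_cont]) auto
    ultimately show "continuous_on UNIV (partial_deriv (\<lambda>x. (\<Prod>c\<in>UNIV. h c (x $ c)) *\<^sub>R A) (axis c 1))"
      by simp
  qed
qed

definition cube_bump :: "nat \<Rightarrow> real^'d \<Rightarrow> real^'d \<Rightarrow> real^'d::finite \<Rightarrow> real" where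
  "cube_bump n a b x = (\<Prod>c\<in>UNIV. periodic_bump n (a $ c) (b $ c) (x $ c))"

lemma cube_bump_nonneg: "0 \<le> cube_bump n a b x"
  and cube_bump_le_1: "cube_bump n a b x \<le> 1"
  unfolding cube_bump_def by (simp_all add: prod_nonneg prod_le_1 periodic_bump_nonneg periodic_bump_le_1)

lemma continuous_on_cube_bump: "continuous_on UNIV (cube_bump n a b)"
proof -
  have "continuous_on UNIV (periodic_bump n s t)" for s t
    using C1_diff_imp_diff[OF C1_differentiable_on_periodic_bump] by (rule differentiable_imp_continuous_on)
  then show ?thesis unfolding cube_bump_def[abs_def]
    by (intro continuous_on_prod continuous_on_compose2[OF _ continuous_on_component]) auto
qed

lemma cube_bump_tendsto:
  assumes "x \<in> box 0 One"
  shows "(\<lambda>n. cube_bump n a b x) \<longlonglongrightarrow> indicator (box a b) x"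
proof -
  have "0 < x $ c" "x $ c < 1" for c using assms by (auto simp: mem_box_cart Cart_1[symmetric])
  then have "(\<lambda>n. cube_bump n a b x) \<longlonglongrightarrow> (\<Prod>c\<in>UNIV. indicator {a $ c<..<b $ c} (x $ c))"
    unfolding cube_bump_def by (intro tendsto_prod periodic_bump_tendsto)
  also have "(\<Prod>c\<in>UNIV. indicator {a $ c<..<b $ c} (x $ c)) = (indicator (box a b) x :: real)"
  proof (cases "x \<in> box a b")
    case True
    then show ?thesis by (simp add: mem_box_cart)
  next
    case False
    then obtain c where "x $ c \<notin> {a $ c<..<b $ c}" by (auto simp: mem_box_cart)
    then have "(\<Prod>c\<in>UNIV. indicator {a $ c<..<b $ c} (x $ c)) = (0 :: real)"
      by (intro prod_zero bexI[of _ c]) auto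
    then show ?thesis using False by simp
  qed
  finally show ?thesis .
qed

section \<open>The trace condition\<close>

lemma Lop_scaleR_eq_0:
  assumes "Uop A = 0"
  shows "Lop (\<lambda>x. \<phi> x *\<^sub>R A) x = 0"
  unfolding Lop_def partial_deriv_def using assms by (simp add: Uop_scaleR vec_eq_iff)

lemma integrable_inner_if_L2_on:
  fixes f :: "'a::euclidean_space \<Rightarrow> 'b::euclidean_space"
  assumes f: "L2_on S f" and S: "S \<in> lmeasurable"
  shows "integrable (lebesgue_on S) (\<lambda>x. A \<bullet> f x)"
proof (rule Bochner_Integration.integrable_bound)
  have "finite_measure (lebesgue_on S)" using S by (rule finite_measure_lebesgue_on)
  then show "integrable (lebesgue_on S) (\<lambda>x. norm A * ((norm (f x))\<^sup>2 + 1))"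
    using f unfolding L2_on_def by (intro integrable_mult_right Bochner_Integration.integrable_add)
      (auto intro: finite_measure.integrable_const)
  show "(\<lambda>x. A \<bullet> f x) \<in> borel_measurable (lebesgue_on S)"
    using f unfolding L2_on_def by (intro borel_measurable_inner) auto
  have "norm (A \<bullet> f x) \<le> norm A * ((norm (f x))\<^sup>2 + 1)" for x
  proof -
    have "0 \<le> (norm (f x))\<^sup>2 - 2 * norm (f x) + 1"
      using zero_le_power2[of "norm (f x) - 1"] by (simp add: power2_diff)
    then have "norm (f x) \<le> (norm (f x))\<^sup>2 + 1" using norm_ge_zero[of "f x"] by linarith
    have "norm (A \<bullet> f x) \<le> norm A * norm (f x)" using Cauchy_Schwarz_ineq2[of A "f x"] by simp
    also have "\<dots> \<le> norm A * ((norm (f x))\<^sup>2 + 1)"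
      using \<open>norm (f x) \<le> (norm (f x))\<^sup>2 + 1\<close> by (rule mult_left_mono) simp
    finally show ?thesis .
  qed
  then show "AE x in lebesgue_on S. norm (A \<bullet> f x) \<le> norm (norm A * ((norm (f x))\<^sup>2 + 1))"
    by (intro AE_I2) (metis abs_of_nonneg norm_ge_zero order_trans real_norm_def)
qed

lemma AE_inner_Ladj_eq_0:
  fixes \<zeta> :: "real^('N::finite \<times> 'p::finite) \<Rightarrow> real^('N \<times> 'N \<times> 'p)"
  assumes L: "is_Ladj \<zeta> f" and A: "symmetric_mat A" and UA: "Uop A = 0"
  shows "AE x in lebesgue_on Omega. A \<bullet> f x = 0"
proof (rule AE_lebesgue_on_eq_0_if_box_integrals_eq_0)
  show Omega: "Omega \<in> sets lebesgue" unfolding Omega_def by simp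
  have "L2_on Omega f" using L unfolding is_Ladj_def by blast
  then show g: "integrable (lebesgue_on Omega) (\<lambda>x. A \<bullet> f x)"
    by (rule integrable_inner_if_L2_on) (simp add: Omega_def)
  fix a b :: "real^('N \<times> 'p)"
  have bumps: "(LINT x|lebesgue_on Omega. cube_bump n a b x * (A \<bullet> f x)) = 0" for n
  proof -
    have "test_fun (\<lambda>x. cube_bump n a b x *\<^sub>R A)"
      unfolding cube_bump_def
      by (rule test_fun_scaleR_prod[OF A C1_differentiable_on_periodic_bump periodic_bump_add_Ints])
    then have "(LINT x|lebesgue_on Omega. Lop (\<lambda>x. cube_bump n a b x *\<^sub>R A) x \<bullet> \<zeta> x)
        = (LINT x|lebesgue_on Omega. (cube_bump n a b x *\<^sub>R A) \<bullet> f x)"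
      using L unfolding is_Ladj_def by blast
    then show ?thesis by (simp add: Lop_scaleR_eq_0[OF UA])
  qed
  have "AE x in lebesgue_on Omega. x \<in> box 0 (One :: real^('N \<times> 'p))"
  proof -
    have "cbox 0 One - box 0 One \<in> null_sets (lebesgue :: (real^('N \<times> 'p)) measure)"
      using negligible_frontier_interval negligible_iff_null_sets by blast
    then have "AE x in lebesgue. x \<in> Omega \<longrightarrow> x \<in> box 0 (One :: real^('N \<times> 'p))"
      unfolding Omega_def by (rule AE_not_in[THEN eventually_mono]) auto
    moreover have "(Omega :: (real^('N \<times> 'p)) set) \<inter> space lebesgue \<in> sets lebesgue" using Omega by simp
    ultimately show ?thesis by (simp add: AE_restrict_space_iff)
  qed
  then have "(\<lambda>n. LINT x|lebesgue_on Omega. cube_bump n a b x * (A \<bullet> f x))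
      \<longlonglongrightarrow> (LINT x|lebesgue_on Omega. indicator (box a b) x * (A \<bullet> f x))"
  proof (intro integral_dominated_convergence[where w = "\<lambda>x. norm (A \<bullet> f x)"])
    show "(\<lambda>x. indicator (box a b) x * (A \<bullet> f x)) \<in> borel_measurable (lebesgue_on Omega)"
      by (intro borel_measurable_times borel_measurable_integrable[OF g] measurable_restrict_space1
          borel_measurable_indicator) simp
    have "cube_bump n a b \<in> borel_measurable lebesgue" for n
      using borel_measurable_continuous_onI[OF continuous_on_cube_bump] by (intro measurable_completion) simp
    then show "(\<lambda>x. cube_bump n a b x * (A \<bullet> f x)) \<in> borel_measurable (lebesgue_on Omega)" for n
      by (intro borel_measurable_times borel_measurable_integrable[OF g] measurable_restrict_space1)
    show "integrable (lebesgue_on Omega) (\<lambda>x. norm (A \<bullet> f x))" using g by simp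
    show "AE x in lebesgue_on Omega. (\<lambda>n. cube_bump n a b x * (A \<bullet> f x))
        \<longlonglongrightarrow> indicator (box a b) x * (A \<bullet> f x)"
      using \<open>AE x in lebesgue_on Omega. x \<in> box 0 One\<close>
      by eventually_elim (intro tendsto_mult cube_bump_tendsto tendsto_const)
    show "AE x in lebesgue_on Omega. norm (cube_bump n a b x * (A \<bullet> f x)) \<le> norm (A \<bullet> f x)" for n
      by (intro AE_I2) (simp add: abs_mult mult_left_le_one_le cube_bump_nonneg cube_bump_le_1)
  qed
  then show "(LINT x|lebesgue_on Omega. indicator (box a b) x * (A \<bullet> f x)) = 0"
    by (simp add: bumps LIMSEQ_const_iff)
qed

lemma AE_orthogonal_subspace:
  fixes f :: "'a \<Rightarrow> 'b::euclidean_space"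
  assumes "subspace S" and "\<And>A. A \<in> S \<Longrightarrow> AE x in M. A \<bullet> f x = 0"
  shows "AE x in M. \<forall>A\<in>S. A \<bullet> f x = 0"
proof -
  obtain B where B: "B \<subseteq> S" "independent B" "S \<subseteq> span B" "card B = dim S"
    by (rule basis_exists)
  then have "AE x in M. \<forall>b\<in>B. b \<bullet> f x = 0"
    using assms(2) by (intro AE_finite_allI finiteI_independent) auto
  then show ?thesis
  proof eventually_elim
    case (elim x)
    then have "orthogonal (f x) A" if "A \<in> S" for A
      using B(3) that by (intro orthogonal_to_span[of A B]) (auto simp: orthogonal_def inner_commute)
    then show ?case by (simp add: orthogonal_def inner_commute)
  qed
qed

theorem lemma2p10:
  assumes "CARD('N::finite) > 1"
  shows "\<exists>C :: real \<Rightarrow> real. \<forall>k (\<zeta> :: real^('N \<times> 'p::finite) \<Rightarrow> real^('N \<times> 'N \<times> 'p)) f.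
           is_Ladj \<zeta> f \<and> (AE x in lebesgue_on Omega. eigenvalues_le (- f x) k)
           \<longrightarrow> (AE x in lebesgue_on Omega. eigenvalues_le (f x) (C k))"
proof (intro exI[of _ "\<lambda>k. real CARD('N \<times> 'N \<times> 'p) * (2 * k)"] allI impI, elim conjE)
  fix k and \<zeta> :: "real^('N \<times> 'p) \<Rightarrow> real^('N \<times> 'N \<times> 'p)" and f
  assume L: "is_Ladj \<zeta> f" and eig: "AE x in lebesgue_on Omega. eigenvalues_le (- f x) k"
  have "AE x in lebesgue_on Omega. symmetric_mat (f x)" using L unfolding is_Ladj_def by blast
  moreover have "AE x in lebesgue_on Omega. \<forall>A\<in>{A. symmetric_mat A \<and> Uop A = 0}. A \<bullet> f x = 0"
    using subspace_symmetric_kernel_Uop by (rule AE_orthogonal_subspace) (auto intro: AE_inner_Ladj_eq_0[OF L])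
  ultimately show "AE x in lebesgue_on Omega. eigenvalues_le (f x) (real CARD('N \<times> 'N \<times> 'p) * (2 * k))"
    using eig
  proof eventually_elim
    case (elim x)
    then obtain d where "f x = arrow_blocks d"
      using ex_arrow_blocks_if_orthogonal_kernel_Uop by blast
    then show ?case using eigenvalues_le_arrow_blocks[OF assms] elim(3) by simp
  qed
qed

end
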